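(* Let $\tau$ be a continuous distributive triangle function on $\Delta^+$, $\Sigma$ a $\sigma$-ring of subsets of a non-empty set $\Omega$, $\gamma$ a $\tau$-decomposable measure on $\Sigma$ that is continuous from below, and $f:\Omega\to[0,+\infty]$ a measurable function that is $\gamma$-integrable on $E\in\Sigma$. Then there exists a non-decreasing sequence $(f_n)_{n\ge1}$ of functions in $\mathcal{S}_{f,E}$ converging pointwise to $f$ such that $\int_E f\,d\gamma=\lim_{n\to\infty}\int_E f_n\,d\gamma$ (weak limit in $\Delta^+$).
   Context: $\Delta^+$ is the set of functions $F:[-\infty,+\infty]\to[0,1]$ that are non-decreasing, left-continuous on $\mathbb{R}$, with $F(x)=0$ for $x\le0$ and $F(+\infty)=1$, ordered pointwise; $\varepsilon_a(x)=1$ if $x>a$, else $0$. A triangle function is a symmetric, associative map $\tau:\Delta^+\times\Delta^+\to\Delta^+$, non-decreasing in each variable, with identity $\varepsilon_0$; $G\oplus H=\tau(G,H)$, $\bigoplus_{k=1}^nG_k=\tau(G_1,\bigoplus_{k=2}^nG_k)$. For $c\ge0$, $c\odot G=\varepsilon_0$ if $c=0$, $(c\odot G)(x)=G(x/c)$ if $c>0$; $\tau$ is distributive if $c\odot(G\oplus H)=(c\odot G)\oplus(c\odot H)$ for all $c\ge0$, $G,H$. Convergence in $\Delta^+$ is weak convergence ($G_n(x)\to G(x)$ at every continuity point $x\in\mathbb{R}$ of $G$); $\tau$ is continuous if continuous for this convergence. A $\tau$-decomposable measure on a ring $\Sigma$ is $\gamma:\Sigma\to\Delta^+$ with $\gamma_\emptyset=\varepsilon_0$,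 $\gamma_{E\cup F}=\tau(\gamma_E,\gamma_F)$ for disjoint $E,F$; continuous from below means $\gamma_{E_n}\to\gamma_E$ whenever $E_n\subseteq E_{n+1}$, $\bigcup E_n=E$ in $\Sigma$. A simple function is $\sum_{i=1}^nx_i\chi_{E_i}$, $x_i\in[0,\infty)$, $E_i\in\Sigma$ pairwise disjoint, with $\int_E f\,d\gamma=\bigoplus_{i=1}^nx_i\odot\gamma_{E\cap E_i}$. Measurable: pointwise limit of simple functions. $\mathcal{S}_{f,E}$: simple $\mathfrak f$ with $\mathfrak f\le f$ on $E$. $f$ is $\gamma$-integrable on $E$ if some $H\in\Delta^+$ satisfies $\int_E\mathfrak f\,d\gamma\ge H$ for all $\mathfrak f\in\mathcal S_{f,E}$; then $\int_Ef\,d\gamma=\inf\{\int_E\mathfrak f\,d\gamma:\mathfrak f\in\mathcal S_{f,E}\}$ in $(\Delta^+,\le)$ (left-continuous regularization of the pointwise infimum). *)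

theory Defs
  imports Complex_Main "HOL-Library.Extended_Nonnegative_Real"
begin

type_synonym dfun = "ereal \<Rightarrow> real"

definition Delta_plus :: "dfun set" where
  "Delta_plus = {F. (\<forall>x. 0 \<le> F x \<and> F x \<le> 1) \<and> mono F
      \<and> (\<forall>x::real. continuous (at_left x) (\<lambda>t. F (ereal t)))
      \<and> (\<forall>x. x \<le> 0 \<longrightarrow> F x = 0) \<and> F \<infinity> = 1}"

definition eps :: "real \<Rightarrow> dfun" where
  "eps a = (\<lambda>x. if ereal a < x then 1 else 0)"

definition triangle_function :: "(dfun \<Rightarrow> dfun \<Rightarrow> dfun) \<Rightarrow> bool" where
  "triangle_function \<tau> \<longleftrightarrow>
     (\<forall>G\<in>Delta_plus. \<forall>H\<in>Delta_plus. \<tau> G H \<in> Delta_plus)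
   \<and> (\<forall>G\<in>Delta_plus. \<forall>H\<in>Delta_plus. \<tau> G H = \<tau> H G)
   \<and> (\<forall>G\<in>Delta_plus. \<forall>H\<in>Delta_plus. \<forall>K\<in>Delta_plus. \<tau> G (\<tau> H K) = \<tau> (\<tau> G H) K)
   \<and> (\<forall>G1\<in>Delta_plus. \<forall>G2\<in>Delta_plus. \<forall>H\<in>Delta_plus. G1 \<le> G2 \<longrightarrow> \<tau> G1 H \<le> \<tau> G2 H)
   \<and> (\<forall>G1\<in>Delta_plus. \<forall>G2\<in>Delta_plus. \<forall>H\<in>Delta_plus. G1 \<le> G2 \<longrightarrow> \<tau> H G1 \<le> \<tau> H G2)
   \<and> (\<forall>G\<in>Delta_plus. \<tau> G (eps 0) = G)"

definition smul :: "real \<Rightarrow> dfun \<Rightarrow> dfun" where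
  "smul c G = (if c = 0 then eps 0 else (\<lambda>x. G (x / ereal c)))"

definition tau_distributive :: "(dfun \<Rightarrow> dfun \<Rightarrow> dfun) \<Rightarrow> bool" where
  "tau_distributive \<tau> \<longleftrightarrow> (\<forall>c\<ge>0. \<forall>G\<in>Delta_plus. \<forall>H\<in>Delta_plus.
      smul c (\<tau> G H) = \<tau> (smul c G) (smul c H))"

definition weak_conv :: "(nat \<Rightarrow> dfun) \<Rightarrow> dfun \<Rightarrow> bool" where
  "weak_conv Gs G \<longleftrightarrow> (\<forall>x::real. isCont (\<lambda>t. G (ereal t)) x \<longrightarrow>
      (\<lambda>n. Gs n (ereal x)) \<longlonglongrightarrow> G (ereal x))"

definition tau_continuous :: "(dfun \<Rightarrow> dfun \<Rightarrow> dfun) \<Rightarrow> bool" where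
  "tau_continuous \<tau> \<longleftrightarrow> (\<forall>Gs G Hs H. (\<forall>n. Gs n \<in> Delta_plus) \<and> (\<forall>n. Hs n \<in> Delta_plus)
      \<and> G \<in> Delta_plus \<and> H \<in> Delta_plus \<and> weak_conv Gs G \<and> weak_conv Hs H
      \<longrightarrow> weak_conv (\<lambda>n. \<tau> (Gs n) (Hs n)) (\<tau> G H))"

definition sigma_ring :: "'a set \<Rightarrow> 'a set set \<Rightarrow> bool" where
  "sigma_ring Om M \<longleftrightarrow> M \<subseteq> Pow Om \<and> {} \<in> M
     \<and> (\<forall>A\<in>M. \<forall>B\<in>M. A - B \<in> M \<and> A \<union> B \<in> M)
     \<and> (\<forall>A::nat \<Rightarrow> 'a set. range A \<subseteq> M \<longrightarrow> (\<Union>i. A i) \<in> M)"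

definition tau_measure :: "'a set set \<Rightarrow> (dfun \<Rightarrow> dfun \<Rightarrow> dfun) \<Rightarrow> ('a set \<Rightarrow> dfun) \<Rightarrow> bool" where
  "tau_measure M \<tau> \<gamma> \<longleftrightarrow> (\<forall>E\<in>M. \<gamma> E \<in> Delta_plus) \<and> \<gamma> {} = eps 0
     \<and> (\<forall>E\<in>M. \<forall>F\<in>M. E \<inter> F = {} \<longrightarrow> \<gamma> (E \<union> F) = \<tau> (\<gamma> E) (\<gamma> F))"

definition continuous_from_below :: "'a set set \<Rightarrow> ('a set \<Rightarrow> dfun) \<Rightarrow> bool" where
  "continuous_from_below M \<gamma> \<longleftrightarrow> (\<forall>En E. (\<forall>n. En n \<in> M) \<and> incseq En \<and> E \<in> M
      \<and> (\<Union>n. En n) = E \<longrightarrow> weak_conv (\<lambda>n. \<gamma> (En n)) (\<gamma> E))"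

fun oplus_list :: "(dfun \<Rightarrow> dfun \<Rightarrow> dfun) \<Rightarrow> dfun list \<Rightarrow> dfun" where
  "oplus_list \<tau> [] = eps 0"
| "oplus_list \<tau> [G] = G"
| "oplus_list \<tau> (G # H # Gs) = \<tau> G (oplus_list \<tau> (H # Gs))"

text \<open>A representation sum x_i chi_{E_i} of a simple function, as a list of pairs (x_i, E_i).\<close>
definition simple_rep :: "'a set set \<Rightarrow> (real \<times> 'a set) list \<Rightarrow> bool" where
  "simple_rep M r \<longleftrightarrow> (\<forall>i<length r. 0 \<le> fst (r ! i) \<and> snd (r ! i) \<in> M)
     \<and> (\<forall>i<length r. \<forall>j<length r. i \<noteq> j \<longrightarrow> snd (r ! i) \<inter> snd (r ! j) = {})"

definition rep_fun :: "(real \<times> 'a set) list \<Rightarrow> 'a \<Rightarrow> ennreal" where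
  "rep_fun r = (\<lambda>\<omega>. \<Sum>i<length r. ennreal (fst (r ! i)) * indicator (snd (r ! i)) \<omega>)"

definition simple_fun :: "'a set set \<Rightarrow> ('a \<Rightarrow> ennreal) \<Rightarrow> bool" where
  "simple_fun M g \<longleftrightarrow> (\<exists>r. simple_rep M r \<and> g = rep_fun r)"

definition rep_integral :: "(dfun \<Rightarrow> dfun \<Rightarrow> dfun) \<Rightarrow> ('a set \<Rightarrow> dfun) \<Rightarrow> 'a set
    \<Rightarrow> (real \<times> 'a set) list \<Rightarrow> dfun" where
  "rep_integral \<tau> \<gamma> E r = oplus_list \<tau> (map (\<lambda>(x, A). smul x (\<gamma> (E \<inter> A))) r)"

definition simple_integral :: "'a set set \<Rightarrow> (dfun \<Rightarrow> dfun \<Rightarrow> dfun) \<Rightarrow> ('a set \<Rightarrow> dfun)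
    \<Rightarrow> 'a set \<Rightarrow> ('a \<Rightarrow> ennreal) \<Rightarrow> dfun" where
  "simple_integral M \<tau> \<gamma> E g = rep_integral \<tau> \<gamma> E (SOME r. simple_rep M r \<and> g = rep_fun r)"

definition measurable_fun :: "'a set set \<Rightarrow> 'a set \<Rightarrow> ('a \<Rightarrow> ennreal) \<Rightarrow> bool" where
  "measurable_fun M Om f \<longleftrightarrow> (\<exists>s. (\<forall>n. simple_fun M (s n))
      \<and> (\<forall>\<omega>\<in>Om. (\<lambda>n. s n \<omega>) \<longlonglongrightarrow> f \<omega>))"

definition S_set :: "'a set set \<Rightarrow> ('a \<Rightarrow> ennreal) \<Rightarrow> 'a set \<Rightarrow> ('a \<Rightarrow> ennreal) set" where
  "S_set M f E = {g. simple_fun M g \<and> (\<forall>\<omega>\<in>E. g \<omega> \<le> f \<omega>)}"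

definition gamma_integrable :: "'a set set \<Rightarrow> (dfun \<Rightarrow> dfun \<Rightarrow> dfun) \<Rightarrow> ('a set \<Rightarrow> dfun)
    \<Rightarrow> ('a \<Rightarrow> ennreal) \<Rightarrow> 'a set \<Rightarrow> bool" where
  "gamma_integrable M \<tau> \<gamma> f E \<longleftrightarrow>
     (\<exists>H\<in>Delta_plus. \<forall>g\<in>S_set M f E. H \<le> simple_integral M \<tau> \<gamma> E g)"

text \<open>Infimum in (Delta-plus, <=): left-continuous regularization of the pointwise infimum.\<close>
definition Delta_Inf :: "dfun set \<Rightarrow> dfun" where
  "Delta_Inf A = (\<lambda>x. if x = \<infinity> then 1 else if x = -\<infinity> then 0
      else (SUP t\<in>{t::real. ereal t < x}. (INF F\<in>A. F (ereal t))))"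

definition gamma_integral :: "'a set set \<Rightarrow> (dfun \<Rightarrow> dfun \<Rightarrow> dfun) \<Rightarrow> ('a set \<Rightarrow> dfun)
    \<Rightarrow> ('a \<Rightarrow> ennreal) \<Rightarrow> 'a set \<Rightarrow> dfun" where
  "gamma_integral M \<tau> \<gamma> f E = Delta_Inf (simple_integral M \<tau> \<gamma> E ` S_set M f E)"

end

theory Submission
  imports Defs "HOL-Algebra.FiniteProduct"
begin

text \<open>
  Two countable families suffice. The rational steps \<open>q \<cdot> \<chi>{q < f}\<close>, \<open>q \<in> \<rat>\<close>, make any
  increasing sequence dominating all of them converge pointwise to \<open>f\<close>. For every rational
  point \<open>q\<close> and precision \<open>1/(k+1)\<close> one further simple function below \<open>f\<close> is chosen whose integral
  at \<open>q\<close> is within that precision of the pointwise infimum \<open>I(q)\<close> of all integrals. Let \<open>f\<^sub>n\<close> be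
  the running maximum of the first \<open>n\<close> functions of both families. By monotonicity of the
  integral, which follows from finite additivity of \<open>\<gamma>\<close> and distributivity of \<open>\<tau>\<close> on a
  common refinement, the integrals of \<open>f\<^sub>n\<close> decrease and converge to \<open>I\<close> at every rational
  point. Squeezed between \<open>I\<close> and its left-continuous regularisation, they then converge to the
  latter at each of its continuity points.
\<close>

section \<open>The space \<open>\<Delta>\<^sup>+\<close> and the scalar action\<close>

lemma eps_zero_in_Delta_plus: "eps 0 \<in> Delta_plus"
proof -
  have "continuous (at_left x) (\<lambda>t. eps 0 (ereal t))" for x :: real
  proof -
    have "eventually (\<lambda>t. eps 0 (ereal t) = eps 0 (ereal x)) (at_left x)"
      unfolding eventually_at_left_field
      by (intro exI[of _ "if x \<le> 0 then x - 1 else 0"]) (auto simp: eps_def)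
    then show ?thesis
      unfolding continuous_within by (simp add: tendsto_eventually eventually_mono)
  qed
  then show ?thesis
    unfolding Delta_plus_def by (auto simp: eps_def mono_def zero_ereal_def)
qed

lemma Delta_plus_le_eps_zero: "G \<in> Delta_plus \<Longrightarrow> G \<le> eps 0"
  unfolding Delta_plus_def le_fun_def eps_def by (auto simp: not_less zero_ereal_def)

lemma Delta_plus_range: "G \<in> Delta_plus \<Longrightarrow> 0 \<le> G x \<and> G x \<le> 1"
  unfolding Delta_plus_def by auto

lemma Delta_plus_mono: "G \<in> Delta_plus \<Longrightarrow> x \<le> y \<Longrightarrow> G x \<le> G y"
  unfolding Delta_plus_def mono_def by auto

lemma ereal_divide_pos_iff: "0 < c \<Longrightarrow> 0 < x / ereal c \<longleftrightarrow> 0 < x"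
  by (cases x) (auto simp: zero_less_divide_iff)

lemma ereal_divide_nonpos: "0 < c \<Longrightarrow> x \<le> 0 \<Longrightarrow> x / ereal c \<le> 0"
  by (cases x) (auto simp: divide_nonpos_pos)

lemma ereal_divide_left_antimono: "0 < c \<Longrightarrow> c \<le> c' \<Longrightarrow> 0 \<le> x \<Longrightarrow> x / ereal c' \<le> x / ereal c"
  by (cases x) (auto simp: divide_left_mono)

lemma smul_eps_zero: "0 \<le> c \<Longrightarrow> smul c (eps 0) = eps 0"
  unfolding smul_def eps_def by (auto simp: ereal_divide_pos_iff zero_ereal_def[symmetric])

lemma smul_in_Delta_plus:
  assumes c: "0 \<le> c" and G: "G \<in> Delta_plus"
  shows "smul c G \<in> Delta_plus"
proof (cases "c = 0")
  case True
  then show ?thesis by (simp add: smul_def eps_zero_in_Delta_plus)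
next
  case False
  with c have c: "0 < c" by simp
  have "continuous (at_left x) (\<lambda>t. G (ereal (t / c)))" for x :: real
  proof -
    have "((\<lambda>s. G (ereal s)) \<longlongrightarrow> G (ereal (x / c))) (at_left (x / c))"
      using G unfolding Delta_plus_def continuous_within by auto
    moreover have "filterlim (\<lambda>t. t / c) (at_left (x / c)) (at_left x)"
      unfolding filterlim_at
    proof
      show "\<forall>\<^sub>F t in at_left x. t / c \<in> {..<x / c} \<and> t / c \<noteq> x / c"
        unfolding eventually_at_left_field using c
        by (intro exI[of _ "x - 1"]) (auto simp: divide_strict_right_mono)
      show "((\<lambda>t. t / c) \<longlongrightarrow> x / c) (at_left x)"
        using c by (intro tendsto_divide tendsto_ident_at tendsto_const) auto
    qed
    ultimately show ?thesis
      unfolding continuous_within by (rule filterlim_compose)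
  qed
  then show ?thesis
    using G c unfolding smul_def Delta_plus_def mono_def by (auto simp: ereal_divide_nonpos)
qed

lemma smul_antimono:
  assumes "0 \<le> c" "c \<le> c'" "G \<in> Delta_plus"
  shows "smul c' G \<le> smul c G"
proof (cases "c = 0")
  case True
  then show ?thesis
    using assms smul_in_Delta_plus[of c' G] Delta_plus_le_eps_zero by (simp add: smul_def)
next
  case False
  then have c: "0 < c" "0 < c'" using assms by auto
  have "G (x / ereal c') \<le> G (x / ereal c)" for x
  proof (cases "0 \<le> x")
    case True
    then show ?thesis using c assms Delta_plus_mono ereal_divide_left_antimono by auto
  next
    case False
    then have "G (x / ereal c') = 0"
      using assms(3) c ereal_divide_nonpos unfolding Delta_plus_def by auto
    then show ?thesis using Delta_plus_range[OF assms(3)] by simp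
  qed
  then show ?thesis using c unfolding le_fun_def smul_def by auto
qed

section \<open>Infima in \<open>\<Delta>\<^sup>+\<close> and weak convergence\<close>

lemma bdd_below_Delta_plus: "A \<subseteq> Delta_plus \<Longrightarrow> bdd_below ((\<lambda>F. F x) ` A)"
  using Delta_plus_range by (intro bdd_belowI[of _ 0]) auto

lemma
  fixes A :: "dfun set"
  assumes A: "A \<subseteq> Delta_plus" "A \<noteq> {}"
  shows Delta_Inf_le_INF: "Delta_Inf A (ereal s) \<le> (INF F\<in>A. F (ereal s))"
    and INF_le_Delta_Inf: "t < s \<Longrightarrow> (INF F\<in>A. F (ereal t)) \<le> Delta_Inf A (ereal s)"
proof -
  define I where "I t = (INF F\<in>A. F (ereal t))" for t
  have I_mono: "I t \<le> I t'" if "t \<le> t'" for t t'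
    unfolding I_def[of t']
  proof (rule cINF_greatest[OF A(2)])
    fix G assume "G \<in> A"
    then have "I t \<le> G (ereal t)"
      unfolding I_def by (intro cINF_lower bdd_below_Delta_plus A(1))
    also have "\<dots> \<le> G (ereal t')"
      using \<open>G \<in> A\<close> A(1) that by (intro Delta_plus_mono) auto
    finally show "I t \<le> G (ereal t')" .
  qed
  have I_le_1: "I t \<le> 1" for t
  proof -
    obtain G where G: "G \<in> A" using A(2) by blast
    then have "I t \<le> G (ereal t)"
      unfolding I_def by (intro cINF_lower bdd_below_Delta_plus A(1))
    also have "\<dots> \<le> 1" using G A(1) Delta_plus_range by blast
    finally show ?thesis .
  qed
  have Delta_Inf_eq: "Delta_Inf A (ereal s) = (SUP t\<in>{t. t < s}. I t)"
    by (simp add: Delta_Inf_def I_def)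
  show "Delta_Inf A (ereal s) \<le> (INF F\<in>A. F (ereal s))"
    unfolding Delta_Inf_eq I_def[symmetric] by (rule cSUP_least) (auto intro: I_mono simp: lt_ex)
  show "(INF F\<in>A. F (ereal t)) \<le> Delta_Inf A (ereal s)" if "t < s"
    unfolding Delta_Inf_eq I_def[symmetric] using that I_le_1 by (intro cSUP_upper bdd_aboveI[of _ 1]) auto
qed

lemma INF_at_rationals_approx:
  fixes A :: "dfun set"
  assumes A: "A \<subseteq> Delta_plus" "A \<noteq> {}"
  obtains Gs :: "nat \<Rightarrow> dfun" where "\<And>n. Gs n \<in> A"
    and "\<And>q e. q \<in> \<rat> \<Longrightarrow> 0 < e \<Longrightarrow> \<exists>n. Gs n (ereal q) < (INF F\<in>A. F (ereal q)) + e"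
proof -
  have "\<exists>G\<in>A. G (ereal q) < (INF F\<in>A. F (ereal q)) + 1 / Suc k" for q k
  proof -
    have "(INF F\<in>A. F (ereal q)) < (INF F\<in>A. F (ereal q)) + 1 / Suc k" by simp
    then show ?thesis by (subst (asm) cINF_less_iff[OF A(2) bdd_below_Delta_plus[OF A(1)]])
  qed
  then have "\<forall>p. \<exists>G. G \<in> A
      \<and> G (ereal (of_rat (fst p))) < (INF F\<in>A. F (ereal (of_rat (fst p)))) + 1 / Suc (snd p)"
    by blast
  from choice[OF this] obtain G where G: "\<And>p. G p \<in> A"
    "\<And>p. G p (ereal (of_rat (fst p))) < (INF F\<in>A. F (ereal (of_rat (fst p)))) + 1 / Suc (snd p)"
    by blast
  show thesis
  proof
    show "G (from_nat n) \<in> A" for n by (rule G(1))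
    fix q e :: real assume "q \<in> \<rat>" "0 < e"
    then obtain r k where r: "q = of_rat r" and k: "inverse (real (Suc k)) < e"
      using reals_Archimedean by (metis Rats_cases)
    show "\<exists>n. G (from_nat n) (ereal q) < (INF F\<in>A. F (ereal q)) + e"
      using G(2)[of "(r, k)"] k r by (intro exI[of _ "to_nat (r, k)"]) (simp add: inverse_eq_divide)
  qed
qed

text \<open>
  The integrals are squeezed between the pointwise infimum \<open>I\<close> and its value at a rational
  point slightly to the right; left-continuity of the regularisation at \<open>x\<close> closes the gap.
\<close>
lemma weak_conv_Delta_Inf:
  fixes A :: "dfun set" and Gs :: "nat \<Rightarrow> dfun"
  assumes A: "A \<subseteq> Delta_plus" and Gs: "\<And>n. Gs n \<in> A" and dec: "decseq Gs"
    and approx: "\<And>q e. q \<in> \<rat> \<Longrightarrow> 0 < e \<Longrightarrow> \<exists>n. Gs n (ereal q) < (INF F\<in>A. F (ereal q)) + e"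
  shows "weak_conv Gs (Delta_Inf A)"
proof -
  define I where "I t = (INF F\<in>A. F (ereal t))" for t
  define J where "J s = Delta_Inf A (ereal s)" for s
  have I_le: "I t \<le> Gs n (ereal t)" for n t
    unfolding I_def using Gs by (intro cINF_lower bdd_below_Delta_plus A)
  have "A \<noteq> {}" using Gs by blast
  note J_le_I = Delta_Inf_le_INF[OF A this, folded I_def J_def]
    and I_le_J = INF_le_Delta_Inf[OF A this, folded I_def J_def]
  show ?thesis
    unfolding weak_conv_def LIMSEQ_iff J_def[symmetric]
  proof (intro allI impI)
    fix x r :: real assume "isCont J x" and r: "0 < r"
    then obtain \<delta> where \<delta>: "0 < \<delta>" "\<And>s. s \<noteq> x \<and> norm (s - x) < \<delta> \<Longrightarrow> norm (J s - J x) < r / 2"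
      unfolding isCont_def by (metis LIM_D half_gt_zero)
    obtain \<rho> where \<rho>: "\<rho> \<in> \<rat>" "x < \<rho>" "\<rho> < x + \<delta> / 2"
      using Rats_dense_in_real[of x "x + \<delta> / 2"] \<delta>(1) by auto
    obtain N where N: "Gs N (ereal \<rho>) < I \<rho> + r / 2"
      using approx[OF \<rho>(1), of "r / 2"] r unfolding I_def by auto
    have "norm (J (x + \<delta> / 2) - J x) < r / 2"
      using \<delta>(1) by (intro \<delta>(2)) simp
    then have "J (x + \<delta> / 2) < J x + r / 2"
      unfolding real_norm_def by arith
    then have up: "Gs N (ereal \<rho>) < J x + r"
      using N I_le_J[OF \<rho>(3)] by simp
    have "norm (Gs n (ereal x) - J x) < r" if "N \<le> n" for n
    proof -
      have "Gs n (ereal x) \<le> Gs n (ereal \<rho>)"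
        using Gs[of n] A \<rho>(2) by (intro Delta_plus_mono) auto
      also have "\<dots> \<le> Gs N (ereal \<rho>)"
        using decseqD[OF dec that] by (rule le_funD)
      finally have "Gs n (ereal x) \<le> Gs N (ereal \<rho>)" .
      moreover have "J x \<le> Gs n (ereal x)"
        using J_le_I[of x] I_le[of x n] by (rule order_trans)
      ultimately show ?thesis using up by simp
    qed
    then show "\<exists>N. \<forall>n\<ge>N. norm (Gs n (ereal x) - J x) < r" by blast
  qed
qed

lemma triangle_function_closed:
  "triangle_function \<tau> \<Longrightarrow> G \<in> Delta_plus \<Longrightarrow> H \<in> Delta_plus \<Longrightarrow> \<tau> G H \<in> Delta_plus"
  unfolding triangle_function_def by (elim conjE) blast

lemma triangle_function_commute:
  "triangle_function \<tau> \<Longrightarrow> G \<in> Delta_plus \<Longrightarrow> H \<in> Delta_plus \<Longrightarrow> \<tau> G H = \<tau> H G"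
  unfolding triangle_function_def by (elim conjE) blast

lemma triangle_function_assoc:
  "triangle_function \<tau> \<Longrightarrow> G \<in> Delta_plus \<Longrightarrow> H \<in> Delta_plus \<Longrightarrow> K \<in> Delta_plus
    \<Longrightarrow> \<tau> G (\<tau> H K) = \<tau> (\<tau> G H) K"
  unfolding triangle_function_def by (elim conjE) blast

lemma triangle_function_eps_zero: "triangle_function \<tau> \<Longrightarrow> G \<in> Delta_plus \<Longrightarrow> \<tau> G (eps 0) = G"
  unfolding triangle_function_def by meson

lemma triangle_function_mono_left:
  "triangle_function \<tau> \<Longrightarrow> G \<in> Delta_plus \<Longrightarrow> G' \<in> Delta_plus \<Longrightarrow> H \<in> Delta_plus \<Longrightarrow> G \<le> G'
    \<Longrightarrow> \<tau> G H \<le> \<tau> G' H"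
  unfolding triangle_function_def by (elim conjE) blast

lemma triangle_function_mono_right:
  "triangle_function \<tau> \<Longrightarrow> G \<in> Delta_plus \<Longrightarrow> H \<in> Delta_plus \<Longrightarrow> H' \<in> Delta_plus \<Longrightarrow> H \<le> H'
    \<Longrightarrow> \<tau> G H \<le> \<tau> G H'"
  unfolding triangle_function_def by (elim conjE) blast

definition Delta_monoid :: "(dfun \<Rightarrow> dfun \<Rightarrow> dfun) \<Rightarrow> dfun monoid" where
  "Delta_monoid \<tau> = \<lparr>carrier = Delta_plus, mult = \<tau>, one = eps 0\<rparr>"

lemma Delta_monoid_simps [simp]:
  "carrier (Delta_monoid \<tau>) = Delta_plus" "mult (Delta_monoid \<tau>) = \<tau>" "one (Delta_monoid \<tau>) = eps 0"
  by (simp_all add: Delta_monoid_def)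

lemma comm_monoid_Delta_monoid: "triangle_function \<tau> \<Longrightarrow> comm_monoid (Delta_monoid \<tau>)"
  apply (rule comm_monoidI)
  unfolding Delta_monoid_simps
  subgoal by (rule triangle_function_closed)
  subgoal by (rule eps_zero_in_Delta_plus)
  subgoal by (rule triangle_function_assoc[symmetric])
  subgoal by (simp add: triangle_function_commute[OF _ eps_zero_in_Delta_plus] triangle_function_eps_zero)
  subgoal by (rule triangle_function_commute)
  done

section \<open>Representations of simple functions\<close>

lemma sum_indicator_disjoint:
  fixes c :: "'i \<Rightarrow> 'b::semiring_1"
  assumes "finite K" "k \<in> K" "\<omega> \<in> A k" "\<And>k'. k' \<in> K \<Longrightarrow> k' \<noteq> k \<Longrightarrow> A k \<inter> A k' = {}"
  shows "(\<Sum>k'\<in>K. c k' * indicator (A k') \<omega>) = c k"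
proof -
  have "(\<Sum>k'\<in>K. c k' * indicator (A k') \<omega>) = (\<Sum>k'\<in>K. if k' = k then c k else 0)"
    using assms(3,4) by (intro sum.cong) (auto simp: indicator_def)
  then show ?thesis using assms(1,2) by simp
qed

lemma rep_fun_eq:
  assumes "simple_rep M r" "i < length r" "\<omega> \<in> snd (r ! i)"
  shows "rep_fun r \<omega> = ennreal (fst (r ! i))"
  unfolding rep_fun_def using assms unfolding simple_rep_def
  by (intro sum_indicator_disjoint) auto

lemma rep_fun_eq_zero: "(\<And>i. i < length r \<Longrightarrow> \<omega> \<notin> snd (r ! i)) \<Longrightarrow> rep_fun r \<omega> = 0"
  unfolding rep_fun_def by (auto intro!: sum.neutral)

lemma simple_fun_someI:
  "simple_fun M g \<Longrightarrow> simple_rep M (SOME r. simple_rep M r \<and> g = rep_fun r)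
    \<and> g = rep_fun (SOME r. simple_rep M r \<and> g = rep_fun r)"
  unfolding simple_fun_def by (rule someI_ex)

lemma simple_fun_sum_indicator:
  fixes I :: "'i set" and x :: "'i \<Rightarrow> real" and A :: "'i \<Rightarrow> 'a set"
  assumes I: "finite I" and x: "\<And>i. i \<in> I \<Longrightarrow> 0 \<le> x i" and A: "\<And>i. i \<in> I \<Longrightarrow> A i \<in> M"
    and disj: "\<And>i j. i \<in> I \<Longrightarrow> j \<in> I \<Longrightarrow> i \<noteq> j \<Longrightarrow> A i \<inter> A j = {}"
  shows "simple_fun M (\<lambda>\<omega>. \<Sum>i\<in>I. ennreal (x i) * indicator (A i) \<omega>)"
proof -
  obtain xs where xs: "set xs = I" "distinct xs" using finite_distinct_list[OF I] by blast
  define r where "r = map (\<lambda>i. (x i, A i)) xs"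
  have "A (xs ! i) \<inter> A (xs ! j) = {}" if "i < length xs" "j < length xs" "i \<noteq> j" for i j
    using that xs by (intro disj) (auto simp: nth_eq_iff_index_eq)
  then have "simple_rep M r"
    unfolding simple_rep_def r_def using xs x A by auto
  moreover have "(\<Sum>i\<in>I. ennreal (x i) * indicator (A i) \<omega>) = rep_fun r \<omega>" for \<omega>
    unfolding rep_fun_def r_def xs(1)[symmetric] sum_list_distinct_conv_sum_set[OF xs(2), symmetric]
    by (simp add: sum_list_sum_nth atLeast0LessThan)
  ultimately show ?thesis
    unfolding simple_fun_def by auto
qed

lemma simple_fun_zero: "simple_fun M (\<lambda>\<omega>. 0)"
  using simple_fun_sum_indicator[of "{}" "\<lambda>_. 0" "\<lambda>_. {}" M] by simp

lemma simple_fun_indicator: "0 \<le> q \<Longrightarrow> L \<in> M \<Longrightarrow> simple_fun M (\<lambda>\<omega>. ennreal q * indicator L \<omega>)"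
  using simple_fun_sum_indicator[of "{()}" "\<lambda>_. q" "\<lambda>_. L" M] by simp

section \<open>Finite \<open>\<tau>\<close>-sums and \<open>\<tau>\<close>-decomposable measures\<close>

locale tau_measure_space =
  fixes \<tau> :: "dfun \<Rightarrow> dfun \<Rightarrow> dfun" and M :: "'a set set" and Om :: "'a set"
    and \<gamma> :: "'a set \<Rightarrow> dfun"
  assumes triangle: "triangle_function \<tau>" and distributive: "tau_distributive \<tau>"
    and sigma_ring: "sigma_ring Om M" and decomposable: "tau_measure M \<tau> \<gamma>"
begin

interpretation Delta: comm_monoid "Delta_monoid \<tau>"
  by (rule comm_monoid_Delta_monoid[OF triangle])

abbreviation oplus_set :: "('i \<Rightarrow> dfun) \<Rightarrow> 'i set \<Rightarrow> dfun" where
  "oplus_set \<equiv> finprod (Delta_monoid \<tau>)"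

lemma tau_closed: "G \<in> Delta_plus \<Longrightarrow> H \<in> Delta_plus \<Longrightarrow> \<tau> G H \<in> Delta_plus"
  by (rule triangle_function_closed[OF triangle])

lemma tau_mono:
  "G \<in> Delta_plus \<Longrightarrow> G' \<in> Delta_plus \<Longrightarrow> H \<in> Delta_plus \<Longrightarrow> H' \<in> Delta_plus
    \<Longrightarrow> G \<le> G' \<Longrightarrow> H \<le> H' \<Longrightarrow> \<tau> G H \<le> \<tau> G' H'"
  by (meson triangle triangle_function_mono_left triangle_function_mono_right
      triangle_function_closed order_trans)

lemma sets_Un: "A \<in> M \<Longrightarrow> B \<in> M \<Longrightarrow> A \<union> B \<in> M"
  and sets_Diff: "A \<in> M \<Longrightarrow> B \<in> M \<Longrightarrow> A - B \<in> M"
  and sets_empty: "{} \<in> M"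
  and sets_into_space: "A \<in> M \<Longrightarrow> A \<subseteq> Om"
  and sets_countable_UN: "(\<And>n::nat. C n \<in> M) \<Longrightarrow> (\<Union>n. C n) \<in> M"
  using sigma_ring unfolding sigma_ring_def by blast+

lemma sets_Int: "A \<in> M \<Longrightarrow> B \<in> M \<Longrightarrow> A \<inter> B \<in> M"
  using sets_Diff[of A "A - B"] sets_Diff[of A B] by (simp add: Diff_Diff_Int)

lemma sets_finite_UN: "finite I \<Longrightarrow> (\<And>i. i \<in> I \<Longrightarrow> C i \<in> M) \<Longrightarrow> (\<Union>i\<in>I. C i) \<in> M"
  by (induction I rule: finite_induct) (auto simp: sets_empty sets_Un)

lemma sets_countable_INT:
  assumes "\<And>n::nat. C n \<in> M"
  shows "(\<Inter>n. C n) \<in> M"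
proof -
  have "C 0 - (\<Union>n. C 0 - C n) \<in> M"
    using assms by (intro sets_Diff sets_countable_UN)
  moreover have "(\<Inter>n. C n) = C 0 - (\<Union>n. C 0 - C n)" by blast
  ultimately show ?thesis by (simp only:)
qed

lemma gamma_in_Delta_plus: "A \<in> M \<Longrightarrow> \<gamma> A \<in> Delta_plus"
  and gamma_empty: "\<gamma> {} = eps 0"
  and gamma_Un: "A \<in> M \<Longrightarrow> B \<in> M \<Longrightarrow> A \<inter> B = {} \<Longrightarrow> \<gamma> (A \<union> B) = \<tau> (\<gamma> A) (\<gamma> B)"
  using decomposable unfolding tau_measure_def by auto

lemma oplus_set_closed: "(\<And>i. i \<in> I \<Longrightarrow> F i \<in> Delta_plus) \<Longrightarrow> oplus_set F I \<in> Delta_plus"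
  using Delta.finprod_closed[of F I] by auto

lemma oplus_set_insert:
  "finite I \<Longrightarrow> a \<notin> I \<Longrightarrow> (\<And>i. i \<in> insert a I \<Longrightarrow> F i \<in> Delta_plus)
    \<Longrightarrow> oplus_set F (insert a I) = \<tau> (F a) (oplus_set F I)"
  by (subst Delta.finprod_insert) auto

lemma oplus_set_cong:
  "(\<And>i. i \<in> I \<Longrightarrow> F i = F' i) \<Longrightarrow> (\<And>i. i \<in> I \<Longrightarrow> F i \<in> Delta_plus)
    \<Longrightarrow> oplus_set F I = oplus_set F' I"
  by (rule Delta.finprod_cong') auto

lemma oplus_list_eq_oplus_set:
  "set Gs \<subseteq> Delta_plus \<Longrightarrow> oplus_list \<tau> Gs = oplus_set (\<lambda>i. Gs ! i) {..<length Gs}"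
proof (induction Gs)
  case Nil
  then show ?case by simp
next
  case (Cons G Gs)
  have "oplus_set (\<lambda>i. (G # Gs) ! i) {..<length (G # Gs)}
      = oplus_set (\<lambda>i. (G # Gs) ! i) (insert 0 (Suc ` {..<length Gs}))"
    by (simp add: lessThan_Suc_eq_insert_0)
  also have "\<dots> = \<tau> G (oplus_set (\<lambda>i. (G # Gs) ! i) (Suc ` {..<length Gs}))"
    using Cons.prems by (subst oplus_set_insert) (auto simp: nth_Cons split: nat.split)
  also have "oplus_set (\<lambda>i. (G # Gs) ! i) (Suc ` {..<length Gs}) = oplus_set (\<lambda>i. Gs ! i) {..<length Gs}"
    using Cons.prems by (subst Delta.finprod_reindex) (auto simp: nth_Cons split: nat.split)
  finally have *: "oplus_set (\<lambda>i. (G # Gs) ! i) {..<length (G # Gs)}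
      = \<tau> G (oplus_set (\<lambda>i. Gs ! i) {..<length Gs})" .
  show ?case
  proof (cases Gs)
    case Nil
    then show ?thesis
      using * Cons.prems triangle_function_eps_zero[OF triangle] by simp
  next
    case (Cons H Hs)
    then show ?thesis using * Cons.IH \<open>set (G # Gs) \<subseteq> Delta_plus\<close> by simp
  qed
qed

lemma oplus_set_mono:
  assumes "finite I" "\<And>i. i \<in> I \<Longrightarrow> F i \<in> Delta_plus" "\<And>i. i \<in> I \<Longrightarrow> F' i \<in> Delta_plus"
    "\<And>i. i \<in> I \<Longrightarrow> F i \<le> F' i"
  shows "oplus_set F I \<le> oplus_set F' I"
  using assms
proof (induction I rule: finite_induct)
  case empty
  then show ?case by simp
next
  case (insert a I)
  then show ?case
    by (simp add: oplus_set_insert tau_mono oplus_set_closed)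
qed

lemma smul_oplus_set:
  assumes "finite I" "0 \<le> c" "\<And>i. i \<in> I \<Longrightarrow> F i \<in> Delta_plus"
  shows "smul c (oplus_set F I) = oplus_set (\<lambda>i. smul c (F i)) I"
  using assms
proof (induction I rule: finite_induct)
  case empty
  then show ?case by (simp add: smul_eps_zero)
next
  case (insert a I)
  have "smul c (oplus_set F (insert a I)) = \<tau> (smul c (F a)) (smul c (oplus_set F I))"
    using insert distributive oplus_set_closed[of I F]
    unfolding tau_distributive_def by (simp add: oplus_set_insert)
  then show ?case
    using insert by (simp add: oplus_set_insert smul_in_Delta_plus)
qed

lemma oplus_set_swap:
  assumes "finite I" "finite J" "\<And>i j. i \<in> I \<Longrightarrow> j \<in> J \<Longrightarrow> F i j \<in> Delta_plus"
  shows "oplus_set (\<lambda>i. oplus_set (F i) J) I = oplus_set (\<lambda>j. oplus_set (\<lambda>i. F i j) I) J"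
  using assms
proof (induction I rule: finite_induct)
  case empty
  then show ?case by (simp add: Delta.finprod_one_eqI)
next
  case (insert a I)
  have "oplus_set (\<lambda>i. oplus_set (F i) J) (insert a I)
      = \<tau> (oplus_set (F a) J) (oplus_set (\<lambda>j. oplus_set (\<lambda>i. F i j) I) J)"
    using insert by (simp add: oplus_set_insert oplus_set_closed)
  also have "\<dots> = oplus_set (\<lambda>j. \<tau> (F a j) (oplus_set (\<lambda>i. F i j) I)) J"
    using insert Delta.finprod_multf[of "F a" J "\<lambda>j. oplus_set (\<lambda>i. F i j) I"]
    by (simp add: Pi_def oplus_set_closed)
  also have "\<dots> = oplus_set (\<lambda>j. oplus_set (\<lambda>i. F i j) (insert a I)) J"
    using insert by (intro oplus_set_cong) (auto simp: oplus_set_closed tau_closed oplus_set_insert)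
  finally show ?case .
qed

lemma gamma_finite_UN:
  assumes "finite I" "\<And>i. i \<in> I \<Longrightarrow> C i \<in> M"
    "\<And>i j. i \<in> I \<Longrightarrow> j \<in> I \<Longrightarrow> i \<noteq> j \<Longrightarrow> C i \<inter> C j = {}"
  shows "\<gamma> (\<Union>i\<in>I. C i) = oplus_set (\<lambda>i. \<gamma> (C i)) I"
  using assms
proof (induction I rule: finite_induct)
  case empty
  show ?case by (simp add: gamma_empty)
next
  case (insert a I)
  have "C a \<inter> (\<Union>i\<in>I. C i) = {}"
    using insert.prems(2) insert.hyps(2) by blast
  then have "\<gamma> (\<Union>i\<in>insert a I. C i) = \<tau> (\<gamma> (C a)) (\<gamma> (\<Union>i\<in>I. C i))"
    using insert by (simp add: gamma_Un sets_finite_UN)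
  then show ?case
    using insert by (simp add: oplus_set_insert gamma_in_Delta_plus)
qed

lemma smul_gamma_split:
  assumes "finite J" "0 \<le> c" "A \<in> M" "\<And>j. j \<in> J \<Longrightarrow> B j \<in> M"
    "\<And>j j'. j \<in> J \<Longrightarrow> j' \<in> J \<Longrightarrow> j \<noteq> j' \<Longrightarrow> B j \<inter> B j' = {}" "A \<subseteq> (\<Union>j\<in>J. B j)"
  shows "smul c (\<gamma> A) = oplus_set (\<lambda>j. smul c (\<gamma> (A \<inter> B j))) J"
proof -
  have "\<gamma> (\<Union>j\<in>J. A \<inter> B j) = oplus_set (\<lambda>j. \<gamma> (A \<inter> B j)) J"
    using assms(5) by (intro gamma_finite_UN assms(1) sets_Int assms(3,4)) blast+
  moreover have "A = (\<Union>j\<in>J. A \<inter> B j)" using assms(6) by blast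
  ultimately have "\<gamma> A = oplus_set (\<lambda>j. \<gamma> (A \<inter> B j)) J" by simp
  then show ?thesis
    using assms by (simp add: smul_oplus_set gamma_in_Delta_plus sets_Int)
qed

text \<open>
  Splitting both sums along the common refinement \<open>E \<inter> A\<^sub>i \<inter> B\<^sub>j\<close> reduces the comparison to one
  cell at a time, where it is the antimonotonicity of the scalar action.
\<close>
lemma step_integral_antimono:
  fixes A B :: "nat \<Rightarrow> 'a set" and x y :: "nat \<Rightarrow> real"
  assumes I: "finite I" and J: "finite J"
    and AM: "\<And>i. i \<in> I \<Longrightarrow> A i \<in> M" and BM: "\<And>j. j \<in> J \<Longrightarrow> B j \<in> M"
    and x: "\<And>i. i \<in> I \<Longrightarrow> 0 \<le> x i" and y: "\<And>j. j \<in> J \<Longrightarrow> 0 \<le> y j"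
    and A_disj: "\<And>i i'. i \<in> I \<Longrightarrow> i' \<in> I \<Longrightarrow> i \<noteq> i' \<Longrightarrow> A i \<inter> A i' = {}"
    and B_disj: "\<And>j j'. j \<in> J \<Longrightarrow> j' \<in> J \<Longrightarrow> j \<noteq> j' \<Longrightarrow> B j \<inter> B j' = {}"
    and same_union: "(\<Union>i\<in>I. A i) = (\<Union>j\<in>J. B j)" and E: "E \<in> M"
    and le: "\<And>i j. i \<in> I \<Longrightarrow> j \<in> J \<Longrightarrow> E \<inter> A i \<inter> B j \<noteq> {} \<Longrightarrow> x i \<le> y j"
  shows "oplus_set (\<lambda>j. smul (y j) (\<gamma> (E \<inter> B j))) J \<le> oplus_set (\<lambda>i. smul (x i) (\<gamma> (E \<inter> A i))) I"
proof -
  define C where "C i j = E \<inter> A i \<inter> B j" for i j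
  have C: "\<gamma> (C i j) \<in> Delta_plus" if "i \<in> I" "j \<in> J" for i j
    unfolding C_def using that AM BM E by (simp add: gamma_in_Delta_plus sets_Int)
  have "oplus_set (\<lambda>j. smul (y j) (\<gamma> (E \<inter> B j))) J
      = oplus_set (\<lambda>j. oplus_set (\<lambda>i. smul (y j) (\<gamma> (C i j))) I) J"
  proof (rule oplus_set_cong)
    fix j assume j: "j \<in> J"
    have "smul (y j) (\<gamma> (E \<inter> B j)) = oplus_set (\<lambda>i. smul (y j) (\<gamma> (E \<inter> B j \<inter> A i))) I"
      using j same_union by (intro smul_gamma_split I y AM E BM sets_Int A_disj) auto
    also have "\<dots> = oplus_set (\<lambda>i. smul (y j) (\<gamma> (C i j))) I"
      unfolding C_def by (simp add: Int_ac)
    finally show "smul (y j) (\<gamma> (E \<inter> B j)) = oplus_set (\<lambda>i. smul (y j) (\<gamma> (C i j))) I" .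
  qed (use y E BM in \<open>simp add: smul_in_Delta_plus gamma_in_Delta_plus sets_Int\<close>)
  also have "\<dots> = oplus_set (\<lambda>i. oplus_set (\<lambda>j. smul (y j) (\<gamma> (C i j))) J) I"
    using C y by (intro oplus_set_swap[symmetric] I J smul_in_Delta_plus) auto
  also have "\<dots> \<le> oplus_set (\<lambda>i. oplus_set (\<lambda>j. smul (x i) (\<gamma> (C i j))) J) I"
  proof (intro oplus_set_mono I J oplus_set_closed smul_in_Delta_plus C x y)
    fix i j assume ij: "i \<in> I" "j \<in> J"
    show "smul (y j) (\<gamma> (C i j)) \<le> smul (x i) (\<gamma> (C i j))"
    proof (cases "C i j = {}")
      case True
      then show ?thesis using ij x y by (simp add: gamma_empty smul_eps_zero)
    next
      case False
      then show ?thesis using ij le by (intro smul_antimono x C) (auto simp: C_def)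
    qed
  qed
  also have "\<dots> = oplus_set (\<lambda>i. smul (x i) (\<gamma> (E \<inter> A i))) I"
  proof (rule oplus_set_cong)
    fix i assume i: "i \<in> I"
    show "oplus_set (\<lambda>j. smul (x i) (\<gamma> (C i j))) J = smul (x i) (\<gamma> (E \<inter> A i))"
      unfolding C_def using i same_union
      by (intro smul_gamma_split[symmetric] J x AM E BM sets_Int B_disj) auto
  qed (use C x in \<open>simp add: smul_in_Delta_plus oplus_set_closed\<close>)
  finally show ?thesis .
qed

end

section \<open>The integral of simple functions\<close>

text \<open>
  Padding a representation \<open>r\<close> by the index \<open>length r\<close>, with value \<open>0\<close> on the rest of \<open>U\<close>,
  turns it into a partition of \<open>U\<close>; two representations then become comparable partitions of
  the same set.
\<close>
definition pad_set :: "(real \<times> 'a set) list \<Rightarrow> 'a set \<Rightarrow> nat \<Rightarrow> 'a set" where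
  "pad_set r U i = (if i < length r then snd (r ! i) else U - (\<Union>k<length r. snd (r ! k)))"

definition pad_val :: "(real \<times> 'a set) list \<Rightarrow> nat \<Rightarrow> real" where
  "pad_val r i = (if i < length r then fst (r ! i) else 0)"

context tau_measure_space
begin

lemma rep_support_in_sets: "simple_rep M r \<Longrightarrow> (\<Union>k<length r. snd (r ! k)) \<in> M"
  unfolding simple_rep_def by (intro sets_finite_UN) auto

lemma pad_partition:
  assumes r: "simple_rep M r" and U: "U \<in> M" and sub: "(\<Union>k<length r. snd (r ! k)) \<subseteq> U"
  shows "i \<le> length r \<Longrightarrow> pad_set r U i \<in> M"
    and "0 \<le> pad_val r i"
    and "i \<le> length r \<Longrightarrow> j \<le> length r \<Longrightarrow> i \<noteq> j \<Longrightarrow> pad_set r U i \<inter> pad_set r U j = {}"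
    and "(\<Union>i\<le>length r. pad_set r U i) = U"
    and "i \<le> length r \<Longrightarrow> \<omega> \<in> pad_set r U i \<Longrightarrow> rep_fun r \<omega> = ennreal (pad_val r i)"
    and "\<omega> \<notin> U \<Longrightarrow> rep_fun r \<omega> = 0"
proof -
  have rM: "\<And>i. i < length r \<Longrightarrow> snd (r ! i) \<in> M \<and> 0 \<le> fst (r ! i)"
    and disj: "\<And>i j. i < length r \<Longrightarrow> j < length r \<Longrightarrow> i \<noteq> j \<Longrightarrow> snd (r ! i) \<inter> snd (r ! j) = {}"
    using r unfolding simple_rep_def by auto
  show "i \<le> length r \<Longrightarrow> pad_set r U i \<in> M"
    using rM U rep_support_in_sets[OF r] by (auto simp: pad_set_def intro: sets_Diff)
  show "0 \<le> pad_val r i" using rM by (simp add: pad_val_def)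
  show "i \<le> length r \<Longrightarrow> j \<le> length r \<Longrightarrow> i \<noteq> j \<Longrightarrow> pad_set r U i \<inter> pad_set r U j = {}"
    using disj by (auto simp: pad_set_def)
  show "(\<Union>i\<le>length r. pad_set r U i) = U"
    using sub by (auto simp: pad_set_def not_less split: if_splits)
  show "i \<le> length r \<Longrightarrow> \<omega> \<in> pad_set r U i \<Longrightarrow> rep_fun r \<omega> = ennreal (pad_val r i)"
    using rep_fun_eq[OF r] rep_fun_eq_zero[of r \<omega>]
    by (cases "i < length r") (auto simp: pad_set_def pad_val_def)
  show "\<omega> \<notin> U \<Longrightarrow> rep_fun r \<omega> = 0"
    using sub by (intro rep_fun_eq_zero) auto
qed

lemma rep_integral_eq_oplus_set:
  assumes r: "simple_rep M r" and E: "E \<in> M"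
  shows "rep_integral \<tau> \<gamma> E r = oplus_set (\<lambda>i. smul (fst (r ! i)) (\<gamma> (E \<inter> snd (r ! i)))) {..<length r}"
proof -
  let ?G = "\<lambda>(x, A). smul x (\<gamma> (E \<inter> A))"
  have G: "?G (r ! i) \<in> Delta_plus" if "i < length r" for i
    using r E that unfolding simple_rep_def
    by (simp add: case_prod_beta smul_in_Delta_plus gamma_in_Delta_plus sets_Int)
  then have "set (map ?G r) \<subseteq> Delta_plus"
    by (metis (no_types, lifting) image_subsetI in_set_conv_nth set_map)
  then show ?thesis
    unfolding rep_integral_def using G
    by (subst oplus_list_eq_oplus_set) (auto simp: case_prod_beta intro!: oplus_set_cong)
qed

lemma rep_integral_pad:
  assumes r: "simple_rep M r" and E: "E \<in> M" and U: "U \<in> M" and sub: "(\<Union>k<length r. snd (r ! k)) \<subseteq> U"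
  shows "rep_integral \<tau> \<gamma> E r = oplus_set (\<lambda>i. smul (pad_val r i) (\<gamma> (E \<inter> pad_set r U i))) {..length r}"
proof -
  let ?F = "\<lambda>i. smul (pad_val r i) (\<gamma> (E \<inter> pad_set r U i))"
  have F: "?F i \<in> Delta_plus" if "i \<le> length r" for i
    using pad_partition[OF r U sub] E that by (simp add: smul_in_Delta_plus gamma_in_Delta_plus sets_Int)
  have "oplus_set ?F {..<length r} = rep_integral \<tau> \<gamma> E r"
    unfolding rep_integral_eq_oplus_set[OF r E]
  proof (rule oplus_set_cong)
    fix i assume i: "i \<in> {..<length r}"
    then show "?F i = smul (fst (r ! i)) (\<gamma> (E \<inter> snd (r ! i)))"
      by (simp add: pad_val_def pad_set_def)
    show "?F i \<in> Delta_plus" using F i by simp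
  qed
  then have "rep_integral \<tau> \<gamma> E r = oplus_set ?F {..<length r}" ..
  also have "\<dots> = \<tau> (?F (length r)) (oplus_set ?F {..<length r})"
  proof -
    have "?F (length r) = eps 0" by (simp add: pad_val_def smul_def)
    moreover have "oplus_set ?F {..<length r} \<in> Delta_plus"
      by (intro oplus_set_closed F) simp
    ultimately show ?thesis
      by (simp add: triangle_function_commute[OF triangle eps_zero_in_Delta_plus]
          triangle_function_eps_zero[OF triangle])
  qed
  also have "\<dots> = oplus_set ?F (insert (length r) {..<length r})"
    using F by (intro oplus_set_insert[symmetric]) auto
  also have "insert (length r) {..<length r} = {..length r}" by auto
  finally show ?thesis .
qed

lemma rep_integral_antimono:
  assumes r: "simple_rep M r" and r': "simple_rep M r'" and E: "E \<in> M"
    and le: "\<And>\<omega>. \<omega> \<in> E \<Longrightarrow> rep_fun r \<omega> \<le> rep_fun r' \<omega>"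
  shows "rep_integral \<tau> \<gamma> E r' \<le> rep_integral \<tau> \<gamma> E r"
proof -
  define U where "U = (\<Union>k<length r. snd (r ! k)) \<union> (\<Union>k<length r'. snd (r' ! k))"
  have U: "U \<in> M"
    unfolding U_def by (intro sets_Un rep_support_in_sets r r')
  have sub: "(\<Union>k<length r. snd (r ! k)) \<subseteq> U" "(\<Union>k<length r'. snd (r' ! k)) \<subseteq> U"
    unfolding U_def by auto
  note p = pad_partition[OF r U sub(1)] and p' = pad_partition[OF r' U sub(2)]
  show ?thesis
    unfolding rep_integral_pad[OF r E U sub(1)] rep_integral_pad[OF r' E U sub(2)]
  proof (rule step_integral_antimono)
    fix i j assume ij: "i \<in> {..length r}" "j \<in> {..length r'}"
      and "E \<inter> pad_set r U i \<inter> pad_set r' U j \<noteq> {}"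
    then obtain \<omega> where "\<omega> \<in> E" "\<omega> \<in> pad_set r U i" "\<omega> \<in> pad_set r' U j" by blast
    then have "ennreal (pad_val r i) \<le> ennreal (pad_val r' j)"
      using le p(5) p'(5) ij by (metis atMost_iff)
    then show "pad_val r i \<le> pad_val r' j" using p'(2) by simp
  qed (use p p' E in auto)
qed

lemma simple_integral_eq:
  assumes "simple_fun M g"
  obtains r where "simple_rep M r" "g = rep_fun r" "simple_integral M \<tau> \<gamma> E g = rep_integral \<tau> \<gamma> E r"
  using simple_fun_someI[OF assms] that unfolding simple_integral_def by blast

lemma simple_integral_in_Delta_plus:
  assumes "simple_fun M g" "E \<in> M"
  shows "simple_integral M \<tau> \<gamma> E g \<in> Delta_plus"
proof -
  obtain r where r: "simple_rep M r" "simple_integral M \<tau> \<gamma> E g = rep_integral \<tau> \<gamma> E r"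
    using simple_integral_eq[OF assms(1)] by metis
  show ?thesis
    unfolding r(2) rep_integral_eq_oplus_set[OF r(1) assms(2)]
    using r(1) assms(2) unfolding simple_rep_def
    by (intro oplus_set_closed smul_in_Delta_plus gamma_in_Delta_plus sets_Int) auto
qed

lemma simple_integral_antimono:
  assumes "simple_fun M g" "simple_fun M h" "E \<in> M" "\<And>\<omega>. \<omega> \<in> E \<Longrightarrow> g \<omega> \<le> h \<omega>"
  shows "simple_integral M \<tau> \<gamma> E h \<le> simple_integral M \<tau> \<gamma> E g"
proof -
  obtain r where r: "simple_rep M r" "g = rep_fun r" "simple_integral M \<tau> \<gamma> E g = rep_integral \<tau> \<gamma> E r"
    using simple_integral_eq[OF assms(1)] by metis
  obtain r' where r': "simple_rep M r'" "h = rep_fun r'" "simple_integral M \<tau> \<gamma> E h = rep_integral \<tau> \<gamma> E r'"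
    using simple_integral_eq[OF assms(2)] by metis
  show ?thesis
    unfolding r(3) r'(3) using rep_integral_antimono[OF r(1) r'(1) assms(3)] assms(4) r(2) r'(2) by simp
qed

lemma simple_fun_max:
  assumes g: "simple_fun M g" and h: "simple_fun M h"
  shows "simple_fun M (\<lambda>\<omega>. max (g \<omega>) (h \<omega>))"
proof -
  obtain r r' where r: "simple_rep M r" "g = rep_fun r" and r': "simple_rep M r'" "h = rep_fun r'"
    using g h unfolding simple_fun_def by blast
  define U where "U = (\<Union>k<length r. snd (r ! k)) \<union> (\<Union>k<length r'. snd (r' ! k))"
  have U: "U \<in> M"
    unfolding U_def by (intro sets_Un rep_support_in_sets r r')
  have sub: "(\<Union>k<length r. snd (r ! k)) \<subseteq> U" "(\<Union>k<length r'. snd (r' ! k)) \<subseteq> U"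
    unfolding U_def by auto
  note p = pad_partition[OF r(1) U sub(1)] and p' = pad_partition[OF r'(1) U sub(2)]
  define K where "K = {..length r} \<times> {..length r'}"
  define x where "x = (\<lambda>(i, j). max (pad_val r i) (pad_val r' j))"
  define A where "A = (\<lambda>(i, j). pad_set r U i \<inter> pad_set r' U j)"
  have A_disj: "A k \<inter> A k' = {}" if "k \<in> K" "k' \<in> K" "k' \<noteq> k" for k k'
    using that p(3) p'(3) unfolding K_def A_def by fastforce
  have "simple_fun M (\<lambda>\<omega>. \<Sum>k\<in>K. ennreal (x k) * indicator (A k) \<omega>)"
    using p(1,2) p'(1) A_disj unfolding K_def
    by (intro simple_fun_sum_indicator) (auto simp: x_def A_def le_max_iff_disj intro: sets_Int)
  moreover have "max (g \<omega>) (h \<omega>) = (\<Sum>k\<in>K. ennreal (x k) * indicator (A k) \<omega>)" for \<omega>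
  proof (cases "\<omega> \<in> U")
    case False
    then show ?thesis
      using p(4,6) p'(6) r(2) r'(2) unfolding K_def A_def by (auto intro!: sum.neutral)
  next
    case True
    then obtain i j where i: "i \<le> length r" "\<omega> \<in> pad_set r U i"
      and j: "j \<le> length r'" "\<omega> \<in> pad_set r' U j"
      using p(4) p'(4) by blast
    then have "(\<Sum>k\<in>K. ennreal (x k) * indicator (A k) \<omega>) = ennreal (x (i, j))"
      by (intro sum_indicator_disjoint A_disj) (auto simp: K_def A_def)
    also have "\<dots> = max (g \<omega>) (h \<omega>)"
      using i j p(5) p'(5) r(2) r'(2) by (simp add: x_def max_of_mono mono_def ennreal_leI)
    finally show ?thesis by simp
  qed
  ultimately show ?thesis by simp
qed

lemma simple_fun_restrict:
  assumes g: "simple_fun M g" and E: "E \<in> M"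
  shows "simple_fun M (\<lambda>\<omega>. g \<omega> * indicator E \<omega>)"
proof -
  obtain r where r: "simple_rep M r" "g = rep_fun r" using g unfolding simple_fun_def by blast
  have "(\<lambda>\<omega>. g \<omega> * indicator E \<omega>)
      = (\<lambda>\<omega>. \<Sum>i<length r. ennreal (fst (r ! i)) * indicator (snd (r ! i) \<inter> E) \<omega>)"
    unfolding r(2) rep_fun_def by (simp add: sum_distrib_right indicator_inter_arith mult.assoc)
  moreover have "simple_fun M \<dots>"
    using r(1) E unfolding simple_rep_def by (intro simple_fun_sum_indicator) (auto intro: sets_Int)
  ultimately show ?thesis by simp
qed

lemma simple_fun_level_set:
  assumes g: "simple_fun M g" and c: "0 \<le> c"
  shows "{\<omega>. ennreal c < g \<omega>} \<in> M"
proof -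
  obtain r where r: "simple_rep M r" "g = rep_fun r" using g unfolding simple_fun_def by blast
  have "{\<omega>. ennreal c < g \<omega>} = (\<Union>i\<in>{i. i < length r \<and> c < fst (r ! i)}. snd (r ! i))"
  proof (intro Set.set_eqI iffI)
    fix \<omega> assume \<omega>: "\<omega> \<in> {\<omega>. ennreal c < g \<omega>}"
    then obtain i where "i < length r" "\<omega> \<in> snd (r ! i)"
      using rep_fun_eq_zero[of r \<omega>] r(2) by force
    then show "\<omega> \<in> (\<Union>i\<in>{i. i < length r \<and> c < fst (r ! i)}. snd (r ! i))"
      using rep_fun_eq[OF r(1)] r(2) c \<omega> by (auto simp: ennreal_less_iff)
  next
    fix \<omega> assume "\<omega> \<in> (\<Union>i\<in>{i. i < length r \<and> c < fst (r ! i)}. snd (r ! i))"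
    then show "\<omega> \<in> {\<omega>. ennreal c < g \<omega>}"
      using rep_fun_eq[OF r(1)] r(2) c by (auto simp: ennreal_less_iff)
  qed
  moreover have "(\<Union>i\<in>{i. i < length r \<and> c < fst (r ! i)}. snd (r ! i)) \<in> M"
    using r(1) unfolding simple_rep_def by (intro sets_finite_UN) auto
  ultimately show ?thesis by simp
qed

text \<open>
  \<open>q < f \<omega>\<close> iff \<open>q + 1/(k+1) < s\<^sub>n \<omega>\<close> for some \<open>k\<close> and all large \<open>n\<close>, where \<open>s\<^sub>n \<rightarrow> f\<close>.
\<close>
lemma measurable_fun_level_set:
  assumes f: "measurable_fun M Om f" and q: "0 \<le> q"
  shows "{\<omega>\<in>Om. ennreal q < f \<omega>} \<in> M"
proof -
  obtain s where s: "\<And>n. simple_fun M (s n)" "\<And>\<omega>. \<omega> \<in> Om \<Longrightarrow> (\<lambda>n. s n \<omega>) \<longlonglongrightarrow> f \<omega>"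
    using f unfolding measurable_fun_def by blast
  define c where "c k = q + 1 / Suc k" for k :: nat
  have c: "0 \<le> c k" "ennreal q < ennreal (c k)" for k
    unfolding c_def using q by (auto simp: ennreal_less_iff)
  define Z where "Z = (\<Union>k. \<Union>N. \<Inter>n. {\<omega>. ennreal (c k) < s (n + N) \<omega>})"
  have "Z \<in> M"
    unfolding Z_def using s(1) c(1) by (intro sets_countable_UN sets_countable_INT simple_fun_level_set)
  moreover have "{\<omega>\<in>Om. ennreal q < f \<omega>} = Z"
  proof (intro Set.set_eqI iffI)
    fix \<omega> assume "\<omega> \<in> {\<omega>\<in>Om. ennreal q < f \<omega>}"
    then have \<omega>: "\<omega> \<in> Om" "ennreal q < f \<omega>" by auto
    have "(\<lambda>k. q + inverse (real (Suc k))) \<longlonglongrightarrow> q + 0"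
      by (intro tendsto_add tendsto_const LIMSEQ_inverse_real_of_nat)
    then have "(\<lambda>k. ennreal (c k)) \<longlonglongrightarrow> ennreal (q + 0)"
      unfolding c_def by (intro tendsto_ennrealI) (simp add: inverse_eq_divide)
    then have "eventually (\<lambda>k. ennreal (c k) < f \<omega>) sequentially"
      using \<omega>(2) by (intro order_tendstoD(2)) auto
    then obtain k where k: "ennreal (c k) < f \<omega>"
      by (auto dest: eventually_happens)
    obtain N where "\<And>n. n \<ge> N \<Longrightarrow> ennreal (c k) < s n \<omega>"
      using order_tendstoD(1)[OF s(2)[OF \<omega>(1)] k] by (auto simp: eventually_sequentially)
    then show "\<omega> \<in> Z" unfolding Z_def by (intro UN_I[of k] UN_I[of N]) auto
  next
    fix \<omega> assume "\<omega> \<in> Z"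
    then obtain k N where kN: "\<And>n. ennreal (c k) < s (n + N) \<omega>" unfolding Z_def by blast
    have "{\<omega>. ennreal (c k) < s (0 + N) \<omega>} \<in> M"
      using s(1) c(1) by (intro simple_fun_level_set)
    then have \<omega>: "\<omega> \<in> Om" using kN[of 0] sets_into_space by blast
    have "ennreal (c k) \<le> f \<omega>"
      using kN by (intro LIMSEQ_le_const[OF s(2)[OF \<omega>]] exI[of _ N])
        (metis le_add_diff_inverse2 less_imp_le)
    then show "\<omega> \<in> {\<omega>\<in>Om. ennreal q < f \<omega>}"
      using \<omega> c(2)[of k] by auto
  qed
  ultimately show ?thesis by simp
qed

end

section \<open>Approximating sequences\<close>

context tau_measure_space
begin

lemma rational_steps_below:
  assumes f: "measurable_fun M Om f"
  obtains p :: "nat \<Rightarrow> 'a \<Rightarrow> ennreal" where "\<And>n. simple_fun M (p n)" "\<And>n \<omega>. p n \<omega> \<le> f \<omega>"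
    "\<And>\<omega> y. \<omega> \<in> Om \<Longrightarrow> y < f \<omega> \<Longrightarrow> \<exists>n. y < p n \<omega>"
proof -
  define q where "q n = max 0 (real_of_rat (from_nat n))" for n :: nat
  define p where "p n \<omega> = ennreal (q n) * indicator {\<omega>\<in>Om. ennreal (q n) < f \<omega>} \<omega>" for n \<omega>
  have approx: "\<exists>n. y < p n \<omega>" if \<omega>: "\<omega> \<in> Om" and y: "y < f \<omega>" for \<omega> y
  proof -
    obtain z where z: "y < z" "z < f \<omega>" using dense[OF y] by blast
    obtain a b where a: "0 \<le> a" "y = ennreal a" and b: "z = ennreal b"
      using z by (cases y; cases z) auto
    obtain \<rho> where \<rho>: "\<rho> \<in> \<rat>" "a < \<rho>" "\<rho> < b"
      using z(1) a b Rats_dense_in_real[of a b] by (auto simp: ennreal_less_iff)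
    then obtain r where r: "\<rho> = of_rat r" by (cases rule: Rats_cases) auto
    have "ennreal \<rho> < z"
      using \<rho>(2,3) a b by (simp add: ennreal_less_iff)
    then have "ennreal \<rho> < f \<omega>"
      using z(2) by (rule less_trans)
    moreover have "q (to_nat r) = \<rho>" using \<rho> a r by (simp add: q_def)
    ultimately show ?thesis
      using \<omega> \<rho>(2) a by (intro exI[of _ "to_nat r"]) (simp add: p_def ennreal_less_iff)
  qed
  have simple: "simple_fun M (p n)" for n
    unfolding p_def by (intro simple_fun_indicator measurable_fun_level_set[OF f]) (simp_all add: q_def)
  have below: "p n \<omega> \<le> f \<omega>" for n \<omega>
    by (auto simp: p_def indicator_def less_imp_le)
  show thesis by (rule that[OF simple below approx])
qed

lemma simple_integral_INF_approx:
  assumes E: "E \<in> M"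
  obtains h :: "nat \<Rightarrow> 'a \<Rightarrow> ennreal" where "\<And>n. h n \<in> S_set M f E"
    and "\<And>q e. q \<in> \<rat> \<Longrightarrow> 0 < e \<Longrightarrow> \<exists>n. simple_integral M \<tau> \<gamma> E (h n) (ereal q)
      < (INF F\<in>simple_integral M \<tau> \<gamma> E ` S_set M f E. F (ereal q)) + e"
proof -
  let ?A = "simple_integral M \<tau> \<gamma> E ` S_set M f E"
  have "?A \<subseteq> Delta_plus"
    using E by (auto simp: S_set_def simple_integral_in_Delta_plus)
  moreover have "(\<lambda>\<omega>. 0) \<in> S_set M f E" by (simp add: S_set_def simple_fun_zero)
  then have "?A \<noteq> {}" by blast
  ultimately obtain Gs :: "nat \<Rightarrow> dfun" where Gs: "\<And>n. Gs n \<in> ?A"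
    and approx: "\<And>q e. q \<in> \<rat> \<Longrightarrow> 0 < e \<Longrightarrow> \<exists>n. Gs n (ereal q) < (INF F\<in>?A. F (ereal q)) + e"
    by (rule INF_at_rationals_approx) blast+
  from Gs have "\<forall>n. \<exists>g. g \<in> S_set M f E \<and> Gs n = simple_integral M \<tau> \<gamma> E g" by blast
  from choice[OF this] obtain h where "\<And>n. h n \<in> S_set M f E" "\<And>n. Gs n = simple_integral M \<tau> \<gamma> E (h n)"
    by blast
  with approx show thesis by (intro that) auto
qed

text \<open>
  The running maximum of the rational steps below \<open>f\<close> and of the given \<open>h\<^sub>n\<close> (cut down to \<open>E\<close>,
  where they lie below \<open>f\<close>).
\<close>
lemma incseq_S_set_dominating:
  fixes h :: "nat \<Rightarrow> 'a \<Rightarrow> ennreal"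
  assumes f: "measurable_fun M Om f" and E: "E \<in> M" and h: "\<And>n. h n \<in> S_set M f E"
  obtains F :: "nat \<Rightarrow> 'a \<Rightarrow> ennreal"
  where "incseq F" "\<And>n. F n \<in> S_set M f E" "\<And>\<omega>. \<omega> \<in> Om \<Longrightarrow> (\<lambda>n. F n \<omega>) \<longlonglongrightarrow> f \<omega>"
    "\<And>n \<omega>. \<omega> \<in> E \<Longrightarrow> h n \<omega> \<le> F (Suc n) \<omega>"
proof -
  obtain p :: "nat \<Rightarrow> 'a \<Rightarrow> ennreal" where p: "\<And>n. simple_fun M (p n)" "\<And>n \<omega>. p n \<omega> \<le> f \<omega>"
    "\<And>\<omega> y. \<omega> \<in> Om \<Longrightarrow> y < f \<omega> \<Longrightarrow> \<exists>n. y < p n \<omega>"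
    using rational_steps_below[OF f] by blast
  define hE where "hE n \<omega> = h n \<omega> * indicator E \<omega>" for n \<omega>
  have hE: "simple_fun M (hE n)" "hE n \<omega> \<le> f \<omega>" for n \<omega>
    using h[of n] E simple_fun_restrict unfolding hE_def S_set_def by (auto simp: indicator_def)
  define F where "F = rec_nat (\<lambda>\<omega>. 0) (\<lambda>n Fn \<omega>. max (Fn \<omega>) (max (p n \<omega>) (hE n \<omega>)))"
  have F_0: "F 0 = (\<lambda>\<omega>. 0)" and F_Suc: "F (Suc n) = (\<lambda>\<omega>. max (F n \<omega>) (max (p n \<omega>) (hE n \<omega>)))" for n
    unfolding F_def by simp_all
  have F_simple: "simple_fun M (F n)" for n
    by (induction n) (simp_all add: F_0 F_Suc simple_fun_zero simple_fun_max p(1) hE(1))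
  have F_le: "F n \<omega> \<le> f \<omega>" for n \<omega>
    by (induction n) (simp_all add: F_0 F_Suc p(2) hE(2))
  have F_inc: "incseq F"
    by (rule incseq_SucI) (simp add: F_Suc le_fun_def)
  show thesis
  proof
    show "incseq F" by (fact F_inc)
    show "F n \<in> S_set M f E" for n
      using F_simple F_le by (simp add: S_set_def)
    show "h n \<omega> \<le> F (Suc n) \<omega>" if "\<omega> \<in> E" for n \<omega>
      using that by (simp add: F_Suc hE_def le_max_iff_disj)
    fix \<omega> assume \<omega>: "\<omega> \<in> Om"
    show "(\<lambda>n. F n \<omega>) \<longlonglongrightarrow> f \<omega>"
    proof (rule order_tendstoI)
      fix y assume "y < f \<omega>"
      then obtain n where "y < p n \<omega>" using p(3)[OF \<omega>] by blast
      moreover have "p n \<omega> \<le> F m \<omega>" if "Suc n \<le> m" for m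
        using F_inc[THEN incseqD, OF that] by (auto simp: F_Suc le_fun_def)
      ultimately show "eventually (\<lambda>m. y < F m \<omega>) sequentially"
        unfolding eventually_sequentially by (meson less_le_trans)
    next
      fix y assume "f \<omega> < y"
      then show "eventually (\<lambda>m. F m \<omega> < y) sequentially"
        using F_le by (intro always_eventually allI) (rule le_less_trans)
    qed
  qed
qed

end

theorem theorem5p2:
  fixes \<tau> :: "dfun \<Rightarrow> dfun \<Rightarrow> dfun" and Om :: "'a set" and M :: "'a set set"
    and \<gamma> :: "'a set \<Rightarrow> dfun" and f :: "'a \<Rightarrow> ennreal" and E :: "'a set"
  assumes "triangle_function \<tau>" and "tau_distributive \<tau>" and "tau_continuous \<tau>"
    and "Om \<noteq> {}" and "sigma_ring Om M"
    and "tau_measure M \<tau> \<gamma>" and "continuous_from_below M \<gamma>"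
    and "measurable_fun M Om f" and "E \<in> M" and "gamma_integrable M \<tau> \<gamma> f E"
  shows "\<exists>fs :: nat \<Rightarrow> 'a \<Rightarrow> ennreal. incseq fs \<and> (\<forall>n. fs n \<in> S_set M f E)
           \<and> (\<forall>\<omega>\<in>Om. (\<lambda>n. fs n \<omega>) \<longlonglongrightarrow> f \<omega>)
           \<and> weak_conv (\<lambda>n. simple_integral M \<tau> \<gamma> E (fs n)) (gamma_integral M \<tau> \<gamma> f E)"
proof -
  interpret tau_measure_space \<tau> M Om \<gamma>
    using assms(1,2,5,6) by (rule tau_measure_space.intro)
  define S where "S = S_set M f E"
  define SI where "SI = simple_integral M \<tau> \<gamma> E"
  have SI_S: "SI ` S \<subseteq> Delta_plus"
    using assms(9) by (auto simp: S_def SI_def S_set_def simple_integral_in_Delta_plus)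
  obtain h :: "nat \<Rightarrow> 'a \<Rightarrow> ennreal" where h: "\<And>n. h n \<in> S"
    and approx: "\<And>q e. q \<in> \<rat> \<Longrightarrow> 0 < e \<Longrightarrow> \<exists>n. SI (h n) (ereal q) < (INF F\<in>SI ` S. F (ereal q)) + e"
    unfolding S_def SI_def by (rule simple_integral_INF_approx[where f = f, OF assms(9)]) blast
  obtain F where F: "incseq F" "\<And>n. F n \<in> S" "\<And>\<omega>. \<omega> \<in> Om \<Longrightarrow> (\<lambda>n. F n \<omega>) \<longlonglongrightarrow> f \<omega>"
    "\<And>n \<omega>. \<omega> \<in> E \<Longrightarrow> h n \<omega> \<le> F (Suc n) \<omega>"
    using incseq_S_set_dominating[where h = h, OF assms(8,9)] h(1) unfolding S_def by blast
  have SI_antimono: "SI g' \<le> SI g" if "g \<in> S" "g' \<in> S" "\<And>\<omega>. \<omega> \<in> E \<Longrightarrow> g \<omega> \<le> g' \<omega>" for g g'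
    using that assms(9) by (simp add: S_def SI_def S_set_def simple_integral_antimono)
  have "weak_conv (\<lambda>n. SI (F n)) (Delta_Inf (SI ` S))"
  proof (rule weak_conv_Delta_Inf[OF SI_S])
    show "decseq (\<lambda>n. SI (F n))"
      using F(2) incseq_SucD[OF F(1)] by (intro decseq_SucI SI_antimono) (auto simp: le_fun_def)
    fix q e :: real assume "q \<in> \<rat>" "0 < e"
    then obtain n where "SI (h n) (ereal q) < (INF F\<in>SI ` S. F (ereal q)) + e" using approx by blast
    moreover have "SI (F (Suc n)) \<le> SI (h n)" using h F(2,4) by (simp add: SI_antimono)
    ultimately show "\<exists>n. SI (F n) (ereal q) < (INF F\<in>SI ` S. F (ereal q)) + e"
      by (intro exI[of _ "Suc n"]) (auto dest: le_funD[of _ _ "ereal q"])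
  qed (use F(2) in \<open>simp add: SI_def\<close>)
  then show ?thesis
    using F(1-3) unfolding gamma_integral_def S_def SI_def by blast
qed

end
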